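(* Let $\mathbf{A} \in \mathbb{R}^{n\times n}$ be invertible and let $\hat{\mathbf{A}}$ be a random $n\times n$ real matrix, invertible almost surely, such that $\mathbb{E}[\hat{\mathbf{A}}^{-2}]$ exists. Assume: (1) (unbiased noise) $\mathbb{E}[\hat{\mathbf{A}}] = \mathbf{A}$; (2) (isotropy) the right-hand side $\mathbf{b}$ is random with auto-correlation $\mathbf{R} = \mathbb{E}[\mathbf{b}\mathbf{b}^T] = \mathbf{I}$; (3) (noise symmetry) $\hat{\mathbf{Z}} = \hat{\mathbf{A}} - \mathbf{A}$ has the same distribution as $-\hat{\mathbf{Z}}$; (4) (residual norm) the error is measured in the norm given by $\mathbf{B} = \mathbf{A}^T\mathbf{A}$. Consider the augmented inverse operator $\hat{\mathbf{A}}^{-1} - \beta \hat{\mathbf{K}}$ with augmentation matrix $\hat{\mathbf{K}} = \hat{\mathbf{A}}^{-1}$, and the optimal augmentation factor $$\beta^* = \arg\min_{\beta\in\mathbb{R}} \mathbb{E}\big[\|\hat{\mathbf{A}}^{-1} - \beta\hat{\mathbf{K}} - \mathbf{A}^{-1}\|_{\mathbf{B},\mathbf{R}}^2\big] = \frac{\mathbb{E}\langle \hat{\mathbf{K}}, \hat{\mathbf{A}}^{-1} - \mathbf{A}^{-1}\rangle_{\mathbf{B},\mathbf{R}}}{\mathbb{E}\|\hat{\mathbf{K}}\|_{\mathbf{B},\mathbf{R}}^2}.$$ Then $\beta^* \geq 0$; equivalently, $\mathbb{E}\,\mathrm{tr}\big[\hat{\mathbf{A}}^{-T}\mathbf{A}^T\mathbf{A}(\hat{\mathbf{A}}^{-1}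 - \mathbf{A}^{-1})\big] \geq 0$.
   Context: For symmetric positive definite $\mathbf{B}$ and symmetric positive semidefinite $\mathbf{R}$, the inner product and semi-norm on $n\times n$ matrices are $\langle \mathbf{M}, \mathbf{N}\rangle_{\mathbf{B},\mathbf{R}} = \mathrm{tr}(\mathbf{R}^{1/2}\mathbf{M}^T\mathbf{B}\mathbf{N}\mathbf{R}^{1/2})$ and $\|\mathbf{M}\|_{\mathbf{B},\mathbf{R}}^2 = \langle \mathbf{M},\mathbf{M}\rangle_{\mathbf{B},\mathbf{R}}$. With $\mathbf{R} = \mathbb{E}[\mathbf{b}\mathbf{b}^T]$ and $\mathbf{b}$ independent of $\hat{\mathbf{A}}$, $\mathbb{E}\|\mathbf{M}\|^2_{\mathbf{B},\mathbf{R}}$ equals the expected squared error $\mathbb{E}\|\mathbf{M}\mathbf{b}\|_{\mathbf{B}}^2$ where $\|\mathbf{v}\|_{\mathbf{B}}^2 = \mathbf{v}^T\mathbf{B}\mathbf{v}$. Expectations are over the distribution of $\hat{\mathbf{A}}$. *)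

theory Defs
  imports "HOL-Analysis.Analysis" "HOL-Probability.Probability"
begin

definition psd_mat :: "real^'n^'n \<Rightarrow> bool" where
  "psd_mat S \<longleftrightarrow> transpose S = S \<and> (\<forall>x. 0 \<le> x \<bullet> (S *v x))"

definition mat_sqrt :: "real^'n^'n \<Rightarrow> real^'n^'n" where
  "mat_sqrt R = (SOME S. psd_mat S \<and> S ** S = R)"

definition ip_BR :: "real^'n^'n \<Rightarrow> real^'n^'n \<Rightarrow> real^'n^'n \<Rightarrow> real^'n^'n \<Rightarrow> real" where
  "ip_BR B R M N = trace (mat_sqrt R ** transpose M ** B ** N ** mat_sqrt R)"

definition normsq_BR :: "real^'n^'n \<Rightarrow> real^'n^'n \<Rightarrow> real^'n^'n \<Rightarrow> real" where
  "normsq_BR B R M = ip_BR B R M M"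

end

theory Submission
  imports Defs
begin

text \<open>
  Write \<open>X = A Ahat\<^sup>-\<^sup>1\<close>. For \<open>R = I\<close> and \<open>B = A\<^sup>T A\<close> the numerator integrand is
  \<open>\<parallel>X\<parallel>\<^sub>F\<^sup>2 - tr X\<close>. Pair the outcome \<open>Ahat = A + Z\<close> with its mirror image \<open>A - Z\<close>, which
  is equally likely by the symmetry of the noise, and let \<open>X\<^sub>1\<close>, \<open>X\<^sub>2\<close> be the corresponding
  matrices. Then \<open>X\<^sub>1\<^sup>-\<^sup>1 + X\<^sub>2\<^sup>-\<^sup>1 = 2 I\<close>, i.e. \<open>X\<^sub>1 + X\<^sub>2 = 2 X\<^sub>1 X\<^sub>2\<close>, and
  \<open>2 tr (X\<^sub>1 X\<^sub>2) \<le> \<parallel>X\<^sub>1\<parallel>\<^sub>F\<^sup>2 + \<parallel>X\<^sub>2\<parallel>\<^sub>F\<^sup>2\<close>. So the integrand summed over each mirror pair is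
  nonnegative, and the symmetry of \<open>Z\<close> turns this into nonnegativity of its expectation.
\<close>

lemma invertible_matrix_inv:
  fixes Y :: "'a::semiring_1^'n^'m"
  assumes "invertible Y"
  shows matrix_inv_right: "Y ** matrix_inv Y = mat 1"
    and matrix_inv_left: "matrix_inv Y ** Y = mat 1"
  using someI_ex[of "\<lambda>Y'. Y ** Y' = mat 1 \<and> Y' ** Y = mat 1"] assms
  unfolding invertible_def matrix_inv_def by auto

lemma matrix_add_rdistrib: "((A::'a::semiring_1^'n^'m) + B) ** C = A ** C + B ** C"
  by (simp add: matrix_matrix_mult_def vec_eq_iff sum.distrib distrib_right)

lemma matrix_diff_ldistrib: "(A::'a::ring_1^'n^'m) ** (B - C) = A ** B - A ** C"
  by (simp add: matrix_matrix_mult_def vec_eq_iff sum_subtractf right_diff_distrib)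

lemma trace_transpose: "trace (transpose (A::'a::semiring_1^'n^'n)) = trace A"
  by (simp add: trace_def transpose_def)

lemma matrix_inv_add_matrix_inv:
  fixes Y1 Y2 :: "'a::semiring_1^'n^'n"
  assumes "invertible Y1" and "invertible Y2"
  shows "matrix_inv Y1 + matrix_inv Y2 = matrix_inv Y1 ** (Y1 + Y2) ** matrix_inv Y2"
proof -
  have "matrix_inv Y1 ** (Y1 + Y2) ** matrix_inv Y2
      = (matrix_inv Y1 ** Y1) ** matrix_inv Y2 + matrix_inv Y1 ** (Y2 ** matrix_inv Y2)"
    by (simp add: matrix_add_ldistrib matrix_add_rdistrib matrix_mul_assoc)
  also have "\<dots> = matrix_inv Y2 + matrix_inv Y1"
    by (simp add: assms matrix_inv_left matrix_inv_right)
  finally show ?thesis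
    by (simp add: add.commute)
qed

lemma trace_transpose_mult_self:
  "trace (transpose X ** X) = (\<Sum>j\<in>UNIV. \<Sum>i\<in>UNIV. (X $ i $ j)\<^sup>2)" for X :: "real^'n^'m"
  by (simp add: trace_def matrix_matrix_mult_def transpose_def power2_eq_square)

lemma trace_transpose_mult_self_nonneg: "0 \<le> trace (transpose X ** X)" for X :: "real^'n^'m"
  by (simp add: trace_transpose_mult_self sum_nonneg)

lemma trace_mult_le_frobenius:
  fixes X :: "real^'n^'m" and Y :: "real^'m^'n"
  shows "2 * trace (X ** Y) \<le> trace (transpose X ** X) + trace (transpose Y ** Y)"
proof -
  have "2 * trace (X ** Y) = (\<Sum>i\<in>UNIV. \<Sum>k\<in>UNIV. 2 * (X $ i $ k * Y $ k $ i))"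
    by (simp add: trace_def matrix_matrix_mult_def sum_distrib_left)
  also have "\<dots> \<le> (\<Sum>i\<in>UNIV. \<Sum>k\<in>UNIV. (X $ i $ k)\<^sup>2 + (Y $ k $ i)\<^sup>2)"
    by (intro sum_mono) (simp add: sum_squares_bound flip: mult.assoc)
  also have "\<dots> = (\<Sum>k\<in>UNIV. \<Sum>i\<in>UNIV. (X $ i $ k)\<^sup>2) + (\<Sum>i\<in>UNIV. \<Sum>k\<in>UNIV. (Y $ k $ i)\<^sup>2)"
    by (subst sum.swap) (simp add: sum.distrib)
  also have "\<dots> = trace (transpose X ** X) + trace (transpose Y ** Y)"
    by (simp only: trace_transpose_mult_self)
  finally show ?thesis .
qed

lemma psd_mat_1: "psd_mat (mat 1)"
  by (simp add: psd_mat_def)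

lemma mat_sqrt_squared:
  assumes "psd_mat S" and "S ** S = R"
  shows "mat_sqrt R ** mat_sqrt R = R"
  using someI[of "\<lambda>S. psd_mat S \<and> S ** S = R"] assms unfolding mat_sqrt_def by blast

lemma ip_BR_eq_trace:
  assumes "mat_sqrt R ** mat_sqrt R = R"
  shows "ip_BR B R M N = trace (R ** transpose M ** B ** N)"
proof -
  let ?S = "mat_sqrt R"
  have "ip_BR B R M N = trace (?S ** (?S ** transpose M ** B ** N))"
    unfolding ip_BR_def by (rule trace_mul_sym)
  then show ?thesis
    by (simp add: matrix_mul_assoc assms)
qed

lemma ip_BR_mat_1: "ip_BR B (mat 1) M N = trace (transpose M ** B ** N)"
  using ip_BR_eq_trace[of "mat 1", OF mat_sqrt_squared[OF psd_mat_1]] by simp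

lemma trace_residual_eq:
  fixes A Y :: "real^'n^'n"
  assumes "invertible A"
  shows "trace (transpose (matrix_inv Y) ** (transpose A ** A) ** (matrix_inv Y - matrix_inv A))
    = trace (transpose (A ** matrix_inv Y) ** (A ** matrix_inv Y)) - trace (A ** matrix_inv Y)"
proof -
  let ?X = "A ** matrix_inv Y"
  have "transpose (matrix_inv Y) ** (transpose A ** A) ** (matrix_inv Y - matrix_inv A)
      = transpose ?X ** (A ** matrix_inv Y - A ** matrix_inv A)"
    by (simp add: matrix_transpose_mul matrix_mul_assoc matrix_diff_ldistrib)
  also have "\<dots> = transpose ?X ** ?X - transpose ?X"
    by (simp add: assms matrix_inv_right matrix_diff_ldistrib)
  finally show ?thesis
    by (simp add: trace_sub trace_transpose)
qed

lemma trace_residual_mirror_pair_nonneg: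
  fixes A Y1 Y2 :: "real^'n^'n"
  assumes "invertible A" and "invertible Y1" and "invertible Y2" and "Y1 + Y2 = A + A"
  shows "0 \<le> trace (transpose (matrix_inv Y1) ** (transpose A ** A) ** (matrix_inv Y1 - matrix_inv A))
           + trace (transpose (matrix_inv Y2) ** (transpose A ** A) ** (matrix_inv Y2 - matrix_inv A))"
proof -
  define X1 where "X1 = A ** matrix_inv Y1"
  define X2 where "X2 = A ** matrix_inv Y2"
  have "X1 + X2 = A ** (matrix_inv Y1 + matrix_inv Y2)"
    unfolding X1_def X2_def by (rule matrix_add_ldistrib[symmetric])
  also have "\<dots> = A ** (matrix_inv Y1 ** (A + A) ** matrix_inv Y2)"
    using assms(2-4) by (simp only: matrix_inv_add_matrix_inv)
  also have "\<dots> = X1 ** X2 + X1 ** X2"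
    unfolding X1_def X2_def
    by (simp only: matrix_add_ldistrib matrix_add_rdistrib matrix_mul_assoc)
  finally have "trace X1 + trace X2 = 2 * trace (X1 ** X2)"
    by (metis trace_add mult_2)
  then show ?thesis
    unfolding trace_residual_eq[OF assms(1)] X1_def[symmetric] X2_def[symmetric]
    using trace_mult_le_frobenius[of X1 X2] by linarith
qed

lemma continuous_on_det [continuous_intros]:
  fixes f :: "'a::topological_space \<Rightarrow> real^'n^'n"
  assumes "continuous_on S f"
  shows "continuous_on S (\<lambda>x. det (f x))"
  unfolding det_def by (intro continuous_intros continuous_on_component assms)

lemma matrix_inv_cramer:
  fixes Y :: "real^'n^'n"
  assumes "det Y \<noteq> 0"
  shows "matrix_inv Y $ k $ j = det (\<chi> i l. if l = k then axis j 1 $ i else Y $ i $ l) / det Y"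
proof -
  have "Y *v (matrix_inv Y *v axis j 1) = axis j 1"
    using assms by (simp add: matrix_vector_mul_assoc matrix_inv_right invertible_det_nz)
  then have "matrix_inv Y *v axis j 1
      = (\<chi> k. det (\<chi> i l. if l = k then axis j 1 $ i else Y $ i $ l) / det Y)"
    using cramer[OF assms] by blast
  then have "(matrix_inv Y *v axis j 1) $ k = det (\<chi> i l. if l = k then axis j 1 $ i else Y $ i $ l) / det Y"
    by simp
  then show ?thesis
    by (simp add: matrix_vector_mult_basis column_def)
qed

lemma continuous_on_matrix_inv: "continuous_on {Y::real^'n^'n. det Y \<noteq> 0} matrix_inv"
proof -
  have "continuous_on {Y::real^'n^'n. det Y \<noteq> 0}
      (\<lambda>Y. \<chi> k j. det (\<chi> i l. if l = k then axis j 1 $ i else Y $ i $ l) / det Y)"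
  proof (intro continuous_intros continuous_on_vec_lambda continuous_on_id)
    fix k j i l
    show "continuous_on {Y. det Y \<noteq> 0} (\<lambda>Y::real^'n^'n. if l = k then axis j 1 $ i else Y $ i $ l)"
      by (cases "l = k") (simp_all add: continuous_on_component continuous_on_id)
  qed simp
  then show ?thesis
    by (rule continuous_on_cong[THEN iffD1, rotated 2]) (simp_all add: vec_eq_iff matrix_inv_cramer)
qed

lemma borel_measurable_matrix_inv: "matrix_inv \<in> borel_measurable (borel :: (real^'n^'n) measure)"
proof -
  let ?U = "{Y::real^'n^'n. det Y \<noteq> 0}"
  have "open ?U"
    by (intro open_Collect_neq continuous_intros)
  then have "(\<lambda>Y. if Y \<in> ?U then matrix_inv Y else (SOME A'. False)) \<in> borel_measurable borel"
    by (intro borel_measurable_continuous_on_if continuous_on_matrix_inv continuous_on_const borel_open)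
  \<comment> \<open>off the invertible matrices, \<open>matrix_inv\<close> is the junk constant \<open>SOME A'. False\<close>\<close>
  moreover have "matrix_inv Y = (SOME A'. False)" if "\<not> invertible Y" for Y :: "real^'n^'n"
    using that unfolding invertible_def matrix_inv_def by meson
  then have "(\<lambda>Y. if Y \<in> ?U then matrix_inv Y else (SOME A'. False)) = matrix_inv"
    by (auto simp: fun_eq_iff invertible_det_nz)
  ultimately show ?thesis
    by simp
qed

lemma AE_uminus_of_symmetric:
  fixes Z :: "'a \<Rightarrow> 'b::{second_countable_topology, real_normed_vector}"
  assumes Z: "Z \<in> borel_measurable M"
    and sym: "distr M borel Z = distr M borel (\<lambda>\<omega>. - Z \<omega>)"
    and P: "{z. P z} \<in> sets borel" and AE: "AE \<omega> in M. P (Z \<omega>)"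
  shows "AE \<omega> in M. P (- Z \<omega>)"
proof -
  have "AE z in distr M borel Z. P z"
    using AE Z P by (simp add: AE_distr_iff)
  then have "AE z in distr M borel (\<lambda>\<omega>. - Z \<omega>). P z"
    by (simp only: sym)
  then show ?thesis
    using Z P by (subst (asm) AE_distr_iff) auto
qed

lemma integral_nonneg_of_symmetric:
  fixes Z :: "'a \<Rightarrow> 'b::{second_countable_topology, real_normed_vector}"
    and g :: "'b \<Rightarrow> real"
  assumes Z: "Z \<in> borel_measurable M"
    and sym: "distr M borel Z = distr M borel (\<lambda>\<omega>. - Z \<omega>)"
    and g: "g \<in> borel_measurable borel"
    and P: "{z. P z} \<in> sets borel" "AE \<omega> in M. P (Z \<omega>)"
    and mirror: "\<And>z. P z \<Longrightarrow> P (- z) \<Longrightarrow> 0 \<le> g z + g (- z)"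
  shows "0 \<le> integral\<^sup>L M (\<lambda>\<omega>. g (Z \<omega>))"
proof (cases "integrable M (\<lambda>\<omega>. g (Z \<omega>))")
  case True
  have mZ: "(\<lambda>\<omega>. - Z \<omega>) \<in> borel_measurable M"
    using Z by measurable
  have "integrable M (\<lambda>\<omega>. g (- Z \<omega>))"
    using True by (simp add: integrable_distr_eq[OF Z g, symmetric] integrable_distr_eq[OF mZ g, symmetric] sym)
  moreover have "integral\<^sup>L M (\<lambda>\<omega>. g (- Z \<omega>)) = integral\<^sup>L M (\<lambda>\<omega>. g (Z \<omega>))"
    using integral_distr[OF Z g] integral_distr[OF mZ g] sym by simp
  moreover have "0 \<le> integral\<^sup>L M (\<lambda>\<omega>. g (Z \<omega>) + g (- Z \<omega>))"
  proof (rule integral_nonneg_AE)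
    show "AE \<omega> in M. 0 \<le> g (Z \<omega>) + g (- Z \<omega>)"
      using P(2) AE_uminus_of_symmetric[OF Z sym P] by eventually_elim (rule mirror)
  qed
  ultimately show ?thesis
    using True by simp
next
  case False
  then show ?thesis
    by (simp add: not_integrable_integral_eq)
qed

theorem theorem4p1:
  fixes M :: "'a measure"
    and A :: "real^'n^'n"
    and Ahat :: "'a \<Rightarrow> real^'n^'n"
    and R B :: "real^'n^'n"
  assumes "prob_space M"
    and "invertible A"
    and "Ahat \<in> borel_measurable M"
    and "AE \<omega> in M. invertible (Ahat \<omega>)"
    and "\<And>i j. integrable M (\<lambda>\<omega>. (matrix_inv (Ahat \<omega>) $ i $ j)\<^sup>2)"
    and "integrable M Ahat"
    and "integral\<^sup>L M Ahat = A"
    and "R = mat 1"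
    and "distr M borel (\<lambda>\<omega>. Ahat \<omega> - A) = distr M borel (\<lambda>\<omega>. - (Ahat \<omega> - A))"
    and "B = transpose A ** A"
  shows "(integral\<^sup>L M (\<lambda>\<omega>. ip_BR B R (matrix_inv (Ahat \<omega>))
                                   (matrix_inv (Ahat \<omega>) - matrix_inv A)))
         / (integral\<^sup>L M (\<lambda>\<omega>. normsq_BR B R (matrix_inv (Ahat \<omega>)))) \<ge> 0"
proof (rule divide_nonneg_nonneg)
  define g where "g z = trace (transpose (matrix_inv (A + z)) ** B ** (matrix_inv (A + z) - matrix_inv A))"
    for z :: "real^'n^'n"
  have "0 \<le> integral\<^sup>L M (\<lambda>\<omega>. g (Ahat \<omega> - A))"
  proof (rule integral_nonneg_of_symmetric[where P = "\<lambda>z. invertible (A + z)"])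
    have "(\<lambda>Y. trace (transpose Y ** B ** (Y - matrix_inv A))) \<in> borel_measurable borel"
      unfolding trace_def matrix_matrix_mult_def transpose_def vec_lambda_beta
      by (intro borel_measurable_continuous_onI continuous_intros)
    then show "g \<in> borel_measurable borel"
      unfolding g_def using borel_measurable_matrix_inv by measurable
    show "{z. invertible (A + z)} \<in> sets borel"
      unfolding invertible_det_nz by (intro borel_open open_Collect_neq continuous_intros)
    show "0 \<le> g z + g (- z)" if "invertible (A + z)" and "invertible (A + - z)" for z
      unfolding g_def assms(10)
      using trace_residual_mirror_pair_nonneg[OF assms(2) that] by simp
  qed (use assms(3,4,9) in auto)
  then show "0 \<le> integral\<^sup>L M (\<lambda>\<omega>. ip_BR B R (matrix_inv (Ahat \<omega>)) (matrix_inv (Ahat \<omega>) - matrix_inv A))"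
    by (simp add: g_def assms(8) ip_BR_mat_1)
  show "0 \<le> integral\<^sup>L M (\<lambda>\<omega>. normsq_BR B R (matrix_inv (Ahat \<omega>)))"
  proof (intro integral_nonneg_AE AE_I2)
    fix \<omega>
    show "0 \<le> normsq_BR B R (matrix_inv (Ahat \<omega>))"
      using trace_transpose_mult_self_nonneg[of "A ** matrix_inv (Ahat \<omega>)"]
      by (simp add: normsq_BR_def assms(8,10) ip_BR_mat_1 matrix_transpose_mul matrix_mul_assoc)
  qed
qed

end
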